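(* Let $t>0$, $\delta\in D$, $x,y\ge0$, and define $$F^t_{\delta}(\lambda)=\exp\left\{-\frac{\lambda x}{1+2\lambda t}\right\}\exp\left\{-\int_{0}^t \frac{\lambda \delta_{u}}{1+2\lambda (t-u)}du\right\},\qquad b_{\delta,x,y}^t(n):=\frac{\frac{(x/(2t))^n}{n!}\mathcal{L}^{-1}F^t_{\delta+2n}(y)}{\sum_{k=0}^\infty\frac{(x/(2t))^k}{k!}\mathcal{L}^{-1}F^t_{\delta+2k}(y)}.$$ Let $U$ be a Poisson random variable with parameter $x/(2t)$, let $X_1,X_2,\dots$ be i.i.d. exponential random variables with rate $1/(2t)$ (Laplace transform $1/(1+2t\lambda)$), and let $X_*$ be a random variable with Laplace transform $F^t_\delta$, all independent. Then $(b_{\delta,x,y}^t(n))_{n\ge0}$ is the conditional distribution of $U$ given $X_*+X_1+\dots+X_U=y$.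
   Context: $D$ denotes the space of piecewise continuous, measurable, locally bounded functions $\mathbb{R}^+\to\mathbb{R}^+$. $\mathcal{L}^{-1}F(y)$ denotes the inverse Laplace transform of $F$ evaluated at $y$ (the density at $y$ of the distribution whose Laplace transform is $F$). *)

theory Defs
  imports "HOL-Probability.Probability"
begin

text \<open>The class D: piecewise continuous, measurable, locally bounded functions
  from [0,oo) to [0,oo). Piecewise continuity is read as: on every compact interval
  [0,a] the function is continuous off a finite set of points.\<close>
definition in_D :: "(real \<Rightarrow> real) \<Rightarrow> bool" where
  "in_D d \<longleftrightarrow> d \<in> borel_measurable borel
     \<and> (\<forall>u\<ge>0. d u \<ge> 0)
     \<and> (\<forall>a\<ge>0. bounded (d ` {0..a}))
     \<and> (\<forall>a\<ge>0. \<exists>S. finite S \<and> continuous_on ({0..a} - S) d)"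

definition Fdelta :: "real \<Rightarrow> real \<Rightarrow> (real \<Rightarrow> real) \<Rightarrow> real \<Rightarrow> real" where
  "Fdelta t x d lam =
     exp (- (lam * x / (1 + 2 * lam * t))) *
     exp (- integral {0..t} (\<lambda>u. lam * d u / (1 + 2 * lam * (t - u))))"

text \<open>g is a density (on [0,oo)) of a probability distribution whose Laplace transform is F,
  i.e. g is (a version of) the inverse Laplace transform of F.\<close>
definition is_inv_laplace :: "(real \<Rightarrow> real) \<Rightarrow> (real \<Rightarrow> real) \<Rightarrow> bool" where
  "is_inv_laplace F g \<longleftrightarrow> g \<in> borel_measurable lborel
     \<and> (\<forall>s. g s \<ge> 0) \<and> (\<forall>s<0. g s = 0)
     \<and> prob_space (density lborel g)
     \<and> (\<forall>lam\<ge>0. (\<integral>s. exp (- lam * s) \<partial>(density lborel g)) = F lam)"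

text \<open>b^t_{delta,x,y}(n), given the inverse Laplace transforms f k of F^t_{delta+2k}.\<close>
definition bcoef :: "real \<Rightarrow> real \<Rightarrow> (nat \<Rightarrow> real \<Rightarrow> real) \<Rightarrow> real \<Rightarrow> nat \<Rightarrow> real" where
  "bcoef t x f y n =
     ((x / (2 * t)) ^ n / fact n * f n y) /
     (\<Sum>k. (x / (2 * t)) ^ k / fact k * f k y)"

end

theory Submission
  imports Defs
begin

text \<open>Given U = k, the sum Y_k = X_* + X_1 + ... + X_k of independent variables has Laplace
  transform F^t_delta(lam) (1 + 2 lam t)^(-k) = F^t_(delta+2k)(lam), so by uniqueness of Laplace
  transforms its law has density f_k, the inverse Laplace transform of F^t_(delta+2k). As U is
  independent of Y_k, the pair (U, Y_U) has joint law P(U = k) f_k(y) dy, and Bayes' formula gives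
  the conditional law of U given Y_U = y; the Poisson factor exp(-x/(2t)) cancels in the quotient.

  Uniqueness of Laplace transforms of laws on [0,oo) is reduced by s |-> exp(-s) to laws on [0,1]:
  there the moments determine the integrals of all continuous functions (Bernstein polynomials),
  hence the characteristic function, hence the law (Levy's uniqueness theorem).\<close>

lemma integrable_comp_exp_neg:
  fixes M :: "real measure" and h :: "real \<Rightarrow> real" and C :: real
  assumes "real_distribution M" and nonneg: "AE s in M. 0 \<le> s"
    and h: "h \<in> borel_measurable borel" and bound: "\<And>u. 0 \<le> u \<Longrightarrow> u \<le> 1 \<Longrightarrow> \<bar>h u\<bar> \<le> C"
  shows "integrable M (\<lambda>s. h (exp (- s)))"
proof -
  interpret real_distribution M by fact
  show ?thesis
    by (rule integrable_const_bound[where B=C]) (use nonneg h bound in \<open>auto elim!: eventually_mono\<close>)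
qed

lemma integrable_Bernstein_monomial_comp_exp_neg:
  fixes M :: "real measure"
  assumes "real_distribution M" and "AE s in M. 0 \<le> s"
  shows "integrable M (\<lambda>s. exp (- s) ^ k * (1 - exp (- s)) ^ m)"
  by (rule integrable_comp_exp_neg[OF assms, where C=1])
     (auto simp: abs_mult intro!: mult_le_one power_le_one)

lemma laplace_eq_imp_integral_Bernstein_monomial_eq:
  fixes M1 M2 :: "real measure"
  assumes M1: "real_distribution M1" "AE s in M1. 0 \<le> s"
    and M2: "real_distribution M2" "AE s in M2. 0 \<le> s"
    and laplace: "\<And>n::nat. (\<integral>s. exp (- real n * s) \<partial>M1) = (\<integral>s. exp (- real n * s) \<partial>M2)"
  shows "(\<integral>s. exp (- s) ^ k * (1 - exp (- s)) ^ m \<partial>M1) = (\<integral>s. exp (- s) ^ k * (1 - exp (- s)) ^ m \<partial>M2)"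
proof (induction m arbitrary: k)
  case 0
  show ?case using laplace[of k] by (simp add: exp_of_nat_mult[symmetric])
next
  case (Suc m)
  have "exp (- s) ^ k * (1 - exp (- s)) ^ Suc m
       = exp (- s) ^ k * (1 - exp (- s)) ^ m - exp (- s) ^ Suc k * (1 - exp (- s)) ^ m" for s :: real
    by (simp add: algebra_simps)
  then show ?case
    using Suc.IH[of k] Suc.IH[of "Suc k"]
    by (simp add: integrable_Bernstein_monomial_comp_exp_neg[OF M1]
                  integrable_Bernstein_monomial_comp_exp_neg[OF M2] del: power_Suc)
qed

lemma Bernstein_polynomial_tendsto:
  fixes g :: "real \<Rightarrow> real"
  assumes "continuous_on {0..1} g" and "u \<in> {0..1}"
  shows "(\<lambda>n. \<Sum>k\<le>n. g (k / n) * Bernstein n k u) \<longlonglongrightarrow> g u"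
proof (rule LIMSEQ_I)
  fix e :: real assume "0 < e"
  then obtain N where "\<forall>n x. N \<le> n \<and> x \<in> {0..1} \<longrightarrow> \<bar>g x - (\<Sum>k\<le>n. g (k / n) * Bernstein n k x)\<bar> < e"
    using Bernstein_Weierstrass[OF assms(1)] by blast
  then show "\<exists>N. \<forall>n\<ge>N. norm ((\<Sum>k\<le>n. g (k / n) * Bernstein n k u) - g u) < e"
    using assms(2) by (auto simp: abs_minus_commute)
qed

lemma Bernstein_polynomial_bound:
  fixes g :: "real \<Rightarrow> real"
  assumes "\<And>v. 0 \<le> v \<Longrightarrow> v \<le> 1 \<Longrightarrow> \<bar>g v\<bar> \<le> C" and "0 \<le> u" "u \<le> 1"
  shows "\<bar>\<Sum>k\<le>n. g (k / n) * Bernstein n k u\<bar> \<le> C"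
proof -
  have "\<bar>\<Sum>k\<le>n. g (k / n) * Bernstein n k u\<bar> \<le> (\<Sum>k\<le>n. \<bar>g (k / n)\<bar> * Bernstein n k u)"
    by (rule order.trans[OF sum_abs]) (simp add: abs_mult Bernstein_nonneg assms)
  also have "\<dots> \<le> (\<Sum>k\<le>n. C * Bernstein n k u)"
  proof (rule sum_mono)
    fix k assume "k \<in> {..n}"
    then have "real k / real n \<le> 1"
      by (cases "n = 0") (auto simp: divide_le_eq_1)
    then show "\<bar>g (k / n)\<bar> * Bernstein n k u \<le> C * Bernstein n k u"
      by (intro mult_right_mono assms Bernstein_nonneg) auto
  qed
  also have "\<dots> = C" by (simp add: sum_distrib_left[symmetric])
  finally show ?thesis .
qed

lemma laplace_eq_imp_integral_continuous_eq:
  fixes M1 M2 :: "real measure" and g :: "real \<Rightarrow> real"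
  assumes M1: "real_distribution M1" "AE s in M1. 0 \<le> s"
    and M2: "real_distribution M2" "AE s in M2. 0 \<le> s"
    and laplace: "\<And>n::nat. (\<integral>s. exp (- real n * s) \<partial>M1) = (\<integral>s. exp (- real n * s) \<partial>M2)"
    and g: "continuous_on UNIV g"
  shows "(\<integral>s. g (exp (- s)) \<partial>M1) = (\<integral>s. g (exp (- s)) \<partial>M2)"
proof -
  define B where "B n u = (\<Sum>k\<le>n. g (k / n) * Bernstein n k u)" for n u
  have g01: "continuous_on {0..1} g"
    using g by (rule continuous_on_subset) simp
  obtain C where C: "\<And>u. 0 \<le> u \<Longrightarrow> u \<le> 1 \<Longrightarrow> \<bar>g u\<bar> \<le> C"
    using compact_imp_bounded[OF compact_continuous_image[OF g01 compact_Icc]]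
    unfolding bounded_iff by fastforce
  have conv: "(\<lambda>n. \<integral>s. B n (exp (- s)) \<partial>M) \<longlonglongrightarrow> (\<integral>s. g (exp (- s)) \<partial>M)"
    if "real_distribution M" and nonneg: "AE s in M. 0 \<le> s" for M
  proof -
    interpret real_distribution M by fact
    show ?thesis
    proof (rule integral_dominated_convergence[where w="\<lambda>_. C"])
      show "AE s in M. (\<lambda>n. B n (exp (- s))) \<longlonglongrightarrow> g (exp (- s))"
        using nonneg by eventually_elim
          (auto simp: B_def intro!: Bernstein_polynomial_tendsto[OF g01])
      show "AE s in M. norm (B n (exp (- s))) \<le> C" for n
        using nonneg by eventually_elim
          (auto simp: B_def intro!: Bernstein_polynomial_bound C)
      show "(\<lambda>s. g (exp (- s))) \<in> borel_measurable M" "(\<lambda>s. B n (exp (- s))) \<in> borel_measurable M" for n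
        using borel_measurable_continuous_onI[OF g] by (auto simp: B_def Bernstein_def)
    qed simp
  qed
  have eq: "(\<integral>s. B n (exp (- s)) \<partial>M1) = (\<integral>s. B n (exp (- s)) \<partial>M2)" for n
  proof -
    have "B n (exp (- s)) = (\<Sum>k\<le>n. (g (k / n) * (n choose k)) * (exp (- s) ^ k * (1 - exp (- s)) ^ (n - k)))" for s
      unfolding B_def Bernstein_def by (simp add: mult_ac)
    then show ?thesis
      by (simp add: Bochner_Integration.integral_sum integrable_Bernstein_monomial_comp_exp_neg[OF M1]
          integrable_Bernstein_monomial_comp_exp_neg[OF M2]
          laplace_eq_imp_integral_Bernstein_monomial_eq[OF M1 M2 laplace] del: of_nat_mult)
  qed
  show ?thesis
    using LIMSEQ_unique[OF conv[OF M1]] conv[OF M2] by (simp add: eq)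
qed

lemma char_distr_exp_neg:
  fixes M :: "real measure"
  assumes "real_distribution M" and "AE s in M. 0 \<le> s"
  shows "char (distr M borel (\<lambda>s. exp (- s))) \<theta>
           = complex_of_real (\<integral>s. cos (\<theta> * exp (- s)) \<partial>M) + \<i> * complex_of_real (\<integral>s. sin (\<theta> * exp (- s)) \<partial>M)"
proof -
  interpret real_distribution M by fact
  have "char (distr M borel (\<lambda>s. exp (- s))) \<theta> = (CLINT s|M. iexp (\<theta> * exp (- s)))"
    by (simp add: char_def integral_distr)
  also have "\<dots> = (CLINT s|M. complex_of_real (cos (\<theta> * exp (- s))) + \<i> * complex_of_real (sin (\<theta> * exp (- s))))"
    by (simp only: exp_Euler cos_of_real sin_of_real flip: of_real_mult)
  also have "\<dots> = complex_of_real (\<integral>s. cos (\<theta> * exp (- s)) \<partial>M) + \<i> * complex_of_real (\<integral>s. sin (\<theta> * exp (- s)) \<partial>M)"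
    using integrable_comp_exp_neg[OF assms, of "\<lambda>u. cos (\<theta> * u)" 1]
      integrable_comp_exp_neg[OF assms, of "\<lambda>u. sin (\<theta> * u)" 1]
    by (simp add: integrable_mult_right)
  finally show ?thesis .
qed

theorem laplace_transform_unique:
  fixes M1 M2 :: "real measure"
  assumes M1: "real_distribution M1" "AE s in M1. 0 \<le> s"
    and M2: "real_distribution M2" "AE s in M2. 0 \<le> s"
    and laplace: "\<And>n::nat. (\<integral>s. exp (- real n * s) \<partial>M1) = (\<integral>s. exp (- real n * s) \<partial>M2)"
  shows "M1 = M2"
proof -
  have "char (distr M1 borel (\<lambda>s. exp (- s))) \<theta> = char (distr M2 borel (\<lambda>s. exp (- s))) \<theta>" for \<theta>
    using laplace_eq_imp_integral_continuous_eq[OF M1 M2 laplace, of "\<lambda>u. cos (\<theta> * u)"]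
      laplace_eq_imp_integral_continuous_eq[OF M1 M2 laplace, of "\<lambda>u. sin (\<theta> * u)"]
    by (simp add: char_distr_exp_neg[OF M1] char_distr_exp_neg[OF M2] continuous_intros)
  moreover have "real_distribution (distr M borel (\<lambda>s. exp (- s)))" if "real_distribution M" for M
  proof -
    interpret real_distribution M by fact
    show ?thesis by simp
  qed
  ultimately have "distr M1 borel (\<lambda>s. exp (- s)) = distr M2 borel (\<lambda>s. exp (- s))"
    using M1(1) M2(1) by (intro Levy_uniqueness ext)
  moreover have "distr (distr M borel (\<lambda>s. exp (- s))) borel (\<lambda>u. - ln u) = M"
    if "real_distribution M" for M
  proof -
    interpret real_distribution M by fact
    show ?thesis
      by (subst distr_distr) (auto intro!: distr_id2 simp: comp_def)
  qed
  ultimately show ?thesis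
    using M1(1) M2(1) by metis
qed

lemma has_integral_inverse_linear:
  fixes t lam c :: real
  assumes "t \<ge> 0" and "lam \<ge> 0"
  shows "((\<lambda>u. lam * c / (1 + 2 * lam * (t - u))) has_integral (c / 2 * ln (1 + 2 * lam * t))) {0..t}"
proof -
  define F where "F u = - (c / 2 * ln (1 + 2 * lam * (t - u)))" for u
  have "((\<lambda>u. lam * c / (1 + 2 * lam * (t - u))) has_integral (F t - F 0)) {0..t}"
  proof (rule fundamental_theorem_of_calculus)
    fix u assume u: "u \<in> {0..t}"
    then have "1 + 2 * lam * (t - u) > 0"
      using assms by (auto intro: add_pos_nonneg)
    then have "(F has_real_derivative (lam * c / (1 + 2 * lam * (t - u)))) (at u within {0..t})"
      unfolding F_def by (auto intro!: derivative_eq_intros simp: field_simps)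
    then show "(F has_vector_derivative lam * c / (1 + 2 * lam * (t - u))) (at u within {0..t})"
      by (simp add: has_real_derivative_iff_has_vector_derivative)
  qed (use assms in auto)
  then show ?thesis by (simp add: F_def)
qed

lemma Fdelta_integrand_integrable:
  fixes t lam :: real
  assumes "t \<ge> 0" and "lam \<ge> 0" and "in_D d"
  shows "(\<lambda>u. lam * d u / (1 + 2 * lam * (t - u))) integrable_on {0..t}"
proof -
  have d_meas: "d \<in> borel_measurable borel"
    using \<open>in_D d\<close> unfolding in_D_def by auto
  obtain K where K: "\<And>u. u \<in> {0..t} \<Longrightarrow> \<bar>d u\<bar> \<le> K"
    using \<open>in_D d\<close> \<open>t \<ge> 0\<close> unfolding in_D_def bounded_iff by fastforce
  have "set_integrable lborel {0..t} (\<lambda>u. lam * d u / (1 + 2 * lam * (t - u)))"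
  proof (rule set_integrable_bound[where f="\<lambda>_. lam * K"])
    show "set_integrable lborel {0..t} (\<lambda>u. lam * K)"
      unfolding set_integrable_def by (rule borel_integrable_compact) (auto intro: continuous_intros)
    show "set_borel_measurable lborel {0..t} (\<lambda>u. lam * d u / (1 + 2 * lam * (t - u)))"
      unfolding set_borel_measurable_def using d_meas by measurable
    show "AE u in lborel. u \<in> {0..t} \<longrightarrow> norm (lam * d u / (1 + 2 * lam * (t - u))) \<le> norm (lam * K)"
    proof (intro AE_I2 impI)
      fix u assume u: "u \<in> {0..t}"
      then have "1 \<le> 1 + 2 * lam * (t - u)"
        using \<open>lam \<ge> 0\<close> by auto
      then have "\<bar>lam * d u / (1 + 2 * lam * (t - u))\<bar> \<le> \<bar>lam * d u\<bar>"
        by (simp add: abs_divide divide_le_eq mult_le_cancel_left1)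
      also have "\<dots> \<le> \<bar>lam * K\<bar>"
        using K[OF u] \<open>lam \<ge> 0\<close> by (simp add: abs_mult mult_left_mono)
      finally show "norm (lam * d u / (1 + 2 * lam * (t - u))) \<le> norm (lam * K)" by simp
    qed
  qed
  then show ?thesis by (rule set_borel_integral_eq_integral(1))
qed

lemma Fdelta_shift_by_2n:
  assumes "t \<ge> 0" and "lam \<ge> 0" and "in_D d"
  shows "Fdelta t x (\<lambda>u. d u + 2 * real n) lam = Fdelta t x d lam * (1 / (1 + 2 * lam * t)) ^ n"
proof -
  have "integral {0..t} (\<lambda>u. lam * (d u + 2 * real n) / (1 + 2 * lam * (t - u)))
     = integral {0..t} (\<lambda>u. lam * d u / (1 + 2 * lam * (t - u)) + lam * (2 * real n) / (1 + 2 * lam * (t - u)))"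
    by (simp add: add_divide_distrib distrib_left)
  also have "\<dots> = integral {0..t} (\<lambda>u. lam * d u / (1 + 2 * lam * (t - u))) + real n * ln (1 + 2 * lam * t)"
    using has_integral_inverse_linear[OF assms(1,2), of "2 * real n"]
    by (simp add: integral_add[OF Fdelta_integrand_integrable[OF assms] has_integral_integrable] integral_unique)
  finally have I: "integral {0..t} (\<lambda>u. lam * (d u + 2 * real n) / (1 + 2 * lam * (t - u)))
     = integral {0..t} (\<lambda>u. lam * d u / (1 + 2 * lam * (t - u))) + real n * ln (1 + 2 * lam * t)" .
  have "exp (- (real n * ln (1 + 2 * lam * t))) = (1 / (1 + 2 * lam * t)) ^ n"
    using assms by (simp add: exp_minus exp_of_nat_mult power_one_over inverse_eq_divide add_pos_nonneg)
  then show ?thesis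
    unfolding Fdelta_def I minus_add_distrib exp_add by (simp only: mult_ac)
qed

lemma laplace_exponential_distributed:
  assumes "distributed M lborel X (exponential_density r)" and "r > 0" and "lam \<ge> 0"
  shows "(\<integral>\<omega>. exp (- lam * X \<omega>) \<partial>M) = r / (r + lam)"
proof -
  interpret P: prob_space "density lborel (exponential_density (r + lam))"
    using assms by (intro prob_space_exponential_density) simp
  have "(\<integral>\<omega>. exp (- lam * X \<omega>) \<partial>M) = (\<integral>s. exponential_density r s * exp (- lam * s) \<partial>lborel)"
    using assms by (intro distributed_integral[symmetric]) (auto intro: exponential_density_nonneg)
  also have "\<dots> = (\<integral>s. r / (r + lam) * exponential_density (r + lam) s \<partial>lborel)"
    using assms by (intro Bochner_Integration.integral_cong)
      (auto simp: exponential_density_def exp_add[symmetric] field_simps)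
  also have "\<dots> = r / (r + lam) * (\<integral>s. 1 \<partial>density lborel (exponential_density (r + lam)))"
    using assms by (subst integral_density) (auto intro: exponential_density_nonneg)
  also have "\<dots> = r / (r + lam)"
    using P.prob_space by simp
  finally show ?thesis .
qed

lemma AE_nonneg_exponential_distributed:
  assumes "distributed M lborel X (exponential_density r)"
  shows "AE \<omega> in M. 0 \<le> X \<omega>"
proof -
  have "AE s in distr M lborel X. 0 \<le> s"
    unfolding distributed_distr_eq_density[OF assms]
    by (subst AE_density) (auto simp: exponential_density_def)
  then show ?thesis
    using assms by (intro AE_distrD[of X M lborel]) (auto dest: distributed_measurable)
qed

lemma (in prob_space) laplace_indep_sum:
  fixes V :: "'i \<Rightarrow> 'a \<Rightarrow> real"
  assumes "finite J" and indep: "indep_vars (\<lambda>_. borel) V J"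
    and nonneg: "\<And>i. i \<in> J \<Longrightarrow> AE \<omega> in M. 0 \<le> V i \<omega>" and "lam \<ge> 0"
  shows "(\<integral>\<omega>. exp (- lam * (\<Sum>i\<in>J. V i \<omega>)) \<partial>M) = (\<Prod>i\<in>J. \<integral>\<omega>. exp (- lam * V i \<omega>) \<partial>M)"
proof -
  have "(\<integral>\<omega>. exp (- lam * (\<Sum>i\<in>J. V i \<omega>)) \<partial>M) = (\<integral>\<omega>. (\<Prod>i\<in>J. exp (- lam * V i \<omega>)) \<partial>M)"
    using \<open>finite J\<close> by (simp add: sum_distrib_left exp_sum flip: sum_negf)
  also have "\<dots> = (\<Prod>i\<in>J. \<integral>\<omega>. exp (- lam * V i \<omega>) \<partial>M)"
  proof (rule indep_vars_lebesgue_integral[where X="\<lambda>i \<omega>. exp (- lam * V i \<omega>)"])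
    show "indep_vars (\<lambda>_. borel) (\<lambda>i \<omega>. exp (- lam * V i \<omega>)) J"
      by (rule indep_vars_compose2[OF indep]) simp
    show "integrable M (\<lambda>\<omega>. exp (- lam * V i \<omega>))" if "i \<in> J" for i
    proof (rule integrable_const_bound[where B=1])
      show "AE \<omega> in M. norm (exp (- lam * V i \<omega>)) \<le> 1"
        using nonneg[OF that] by eventually_elim (use \<open>lam \<ge> 0\<close> in simp)
      have "V i \<in> borel_measurable M"
        using indep that unfolding indep_vars_def by simp
      then show "(\<lambda>\<omega>. exp (- lam * V i \<omega>)) \<in> borel_measurable M"
        by measurable
    qed
  qed fact
  finally show ?thesis .
qed

lemma laplace_Xs_plus_sum_exponentials:
  fixes V :: "nat option option \<Rightarrow> 'a \<Rightarrow> real" and X :: "nat \<Rightarrow> 'a \<Rightarrow> real"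
  assumes "prob_space M" and "t > 0" and "in_D d" and "lam \<ge> 0"
    and X_exp: "\<And>i. distributed M lborel (X i) (exponential_density (1 / (2 * t)))"
    and Xs_nonneg: "AE \<omega> in M. Xs \<omega> \<ge> 0"
    and Xs_laplace: "(\<integral>\<omega>. exp (- lam * Xs \<omega>) \<partial>M) = Fdelta t x d lam"
    and indep: "prob_space.indep_vars M (\<lambda>_. borel) V UNIV"
    and V: "V (Some None) = Xs" "\<And>i. V (Some (Some i)) = X i"
  shows "(\<integral>\<omega>. exp (- lam * (Xs \<omega> + (\<Sum>i<n. X i \<omega>))) \<partial>M) = Fdelta t x (\<lambda>u. d u + 2 * real n) lam"
proof -
  interpret prob_space M by fact
  define J where "J = insert (Some None) ((\<lambda>i. Some (Some i)) ` {..<n})"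
  have sum_J: "(\<Sum>i\<in>J. g i) = g (Some None) + (\<Sum>i<n. g (Some (Some i)))" for g :: "nat option option \<Rightarrow> real"
    unfolding J_def by (subst sum.insert) (auto simp: sum.reindex inj_on_def)
  have prod_J: "(\<Prod>i\<in>J. g i) = g (Some None) * (\<Prod>i<n. g (Some (Some i)))" for g :: "nat option option \<Rightarrow> real"
    unfolding J_def by (subst prod.insert) (auto simp: prod.reindex inj_on_def)
  have "(\<integral>\<omega>. exp (- lam * (Xs \<omega> + (\<Sum>i<n. X i \<omega>))) \<partial>M) = (\<integral>\<omega>. exp (- lam * (\<Sum>i\<in>J. V i \<omega>)) \<partial>M)"
    by (simp add: sum_J V)
  also have "\<dots> = (\<Prod>i\<in>J. \<integral>\<omega>. exp (- lam * V i \<omega>) \<partial>M)"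
    using \<open>lam \<ge> 0\<close> by (intro laplace_indep_sum indep_vars_subset[OF indep])
      (auto simp: J_def V Xs_nonneg AE_nonneg_exponential_distributed[OF X_exp])
  also have "\<dots> = Fdelta t x d lam * (1 / (1 + 2 * lam * t)) ^ n"
    using Xs_laplace laplace_exponential_distributed[OF X_exp] \<open>t > 0\<close> \<open>lam \<ge> 0\<close>
    by (simp add: prod_J V field_simps)
  also have "\<dots> = Fdelta t x (\<lambda>u. d u + 2 * real n) lam"
    using \<open>t > 0\<close> \<open>lam \<ge> 0\<close> \<open>in_D d\<close> by (simp add: Fdelta_shift_by_2n)
  finally show ?thesis .
qed

lemma is_inv_laplace_real_distribution:
  assumes "is_inv_laplace F g"
  shows "real_distribution (density lborel g)" and "AE s in density lborel g. 0 \<le> s"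
proof -
  show "real_distribution (density lborel g)"
    using assms unfolding is_inv_laplace_def real_distribution_def real_distribution_axioms_def by simp
  have "AE s in lborel. 0 < ennreal (g s) \<longrightarrow> 0 \<le> s"
    using assms unfolding is_inv_laplace_def by (intro AE_I2) (metis less_irrefl not_le ennreal_0)
  then show "AE s in density lborel g. 0 \<le> s"
    using assms unfolding is_inv_laplace_def by (subst AE_density) auto
qed

lemma distr_Xs_plus_sum_exponentials:
  fixes V :: "nat option option \<Rightarrow> 'a \<Rightarrow> real" and X :: "nat \<Rightarrow> 'a \<Rightarrow> real"
  assumes "prob_space M" and "t > 0" and "in_D d"
    and g: "is_inv_laplace (Fdelta t x (\<lambda>u. d u + 2 * real n)) g"
    and X_exp: "\<And>i. distributed M lborel (X i) (exponential_density (1 / (2 * t)))"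
    and Xs_rv: "Xs \<in> borel_measurable M"
    and Xs_nonneg: "AE \<omega> in M. Xs \<omega> \<ge> 0"
    and Xs_laplace: "\<And>lam. lam \<ge> 0 \<Longrightarrow> (\<integral>\<omega>. exp (- lam * Xs \<omega>) \<partial>M) = Fdelta t x d lam"
    and indep: "prob_space.indep_vars M (\<lambda>_. borel) V UNIV"
    and V: "V (Some None) = Xs" "\<And>i. V (Some (Some i)) = X i"
  shows "distr M borel (\<lambda>\<omega>. Xs \<omega> + (\<Sum>i<n. X i \<omega>)) = density lborel g"
proof (rule laplace_transform_unique)
  interpret prob_space M by fact
  have [measurable]: "X i \<in> borel_measurable M" for i
    using distributed_measurable[OF X_exp] by simp
  note Xs_rv[measurable]
  show "real_distribution (distr M borel (\<lambda>\<omega>. Xs \<omega> + (\<Sum>i<n. X i \<omega>)))"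
    by simp
  have "AE \<omega> in M. \<forall>i\<in>{..<n}. 0 \<le> X i \<omega>"
    by (rule AE_finite_allI) (auto intro: AE_nonneg_exponential_distributed[OF X_exp])
  then have "AE \<omega> in M. 0 \<le> Xs \<omega> + (\<Sum>i<n. X i \<omega>)"
    using Xs_nonneg by eventually_elim (auto intro!: add_nonneg_nonneg sum_nonneg)
  then show "AE s in distr M borel (\<lambda>\<omega>. Xs \<omega> + (\<Sum>i<n. X i \<omega>)). 0 \<le> s"
    by (subst AE_distr_iff) auto
  show "real_distribution (density lborel g)" "AE s in density lborel g. 0 \<le> s"
    using is_inv_laplace_real_distribution[OF g] by auto
  show "(\<integral>s. exp (- real k * s) \<partial>distr M borel (\<lambda>\<omega>. Xs \<omega> + (\<Sum>i<n. X i \<omega>)))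
          = (\<integral>s. exp (- real k * s) \<partial>density lborel g)" for k
    using g laplace_Xs_plus_sum_exponentials[OF assms(1-3) _ X_exp Xs_nonneg Xs_laplace indep V]
    by (simp add: integral_distr is_inv_laplace_def)
qed

lemma measure_label_and_Xs_plus_sum:
  fixes V :: "nat option option \<Rightarrow> 'a \<Rightarrow> real" and U :: "'a \<Rightarrow> nat"
  assumes "prob_space M" and indep: "prob_space.indep_vars M (\<lambda>_. borel) V UNIV"
    and V: "V None = (\<lambda>\<omega>. real (U \<omega>))" "V (Some None) = Xs" "\<And>i. V (Some (Some i)) = X i"
    and "C \<in> sets borel"
  shows "measure M {\<omega> \<in> space M. U \<omega> = n \<and> Xs \<omega> + (\<Sum>i<n. X i \<omega>) \<in> C}
           = measure M {\<omega> \<in> space M. U \<omega> = n} * measure M {\<omega> \<in> space M. Xs \<omega> + (\<Sum>i<n. X i \<omega>) \<in> C}"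
proof -
  interpret prob_space M by fact
  define J where "J = insert (Some None) ((\<lambda>i. Some (Some i)) ` {..<n})"
  have "indep_var borel ((\<lambda>v. v None) \<circ> (\<lambda>\<omega>. restrict (\<lambda>i. V i \<omega>) {None}))
          borel ((\<lambda>v. v (Some None) + (\<Sum>i<n. v (Some (Some i)))) \<circ> (\<lambda>\<omega>. restrict (\<lambda>i. V i \<omega>) J))"
    by (intro indep_var_compose[OF indep_var_restrict[OF indep]]) (auto simp: J_def)
  moreover have "(\<lambda>v. v None) \<circ> (\<lambda>\<omega>. restrict (\<lambda>i. V i \<omega>) {None}) = (\<lambda>\<omega>. real (U \<omega>))"
    by (auto simp: V)
  moreover have "(\<lambda>v. v (Some None) + (\<Sum>i<n. v (Some (Some i)))) \<circ> (\<lambda>\<omega>. restrict (\<lambda>i. V i \<omega>) J)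
      = (\<lambda>\<omega>. Xs \<omega> + (\<Sum>i<n. X i \<omega>))"
    by (auto simp: V J_def)
  ultimately have "indep_var borel (\<lambda>\<omega>. real (U \<omega>)) borel (\<lambda>\<omega>. Xs \<omega> + (\<Sum>i<n. X i \<omega>))"
    by simp
  from prob_indep_random_variable[OF this _ \<open>C \<in> sets borel\<close>, of "{real n}"]
  show ?thesis by simp
qed

lemma ennreal_suminf_times_ratio:
  fixes q :: "nat \<Rightarrow> real"
  assumes "c > 0" and q: "\<And>k. 0 \<le> q k" and fin: "(\<Sum>k. ennreal (c * q k)) \<noteq> \<infinity>"
  shows "0 \<le> q n / suminf q" and "q n / suminf q \<le> 1"
    and "(\<Sum>k. ennreal (c * q k)) * ennreal (q n / suminf q) = ennreal (c * q n)"
proof -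
  have "summable (\<lambda>k. c * q k)"
    using fin \<open>c > 0\<close> q by (intro summable_suminf_not_top) auto
  then have "summable q"
    using \<open>c > 0\<close> by (simp add: summable_cmult_iff)
  then have sum: "(\<Sum>k. ennreal (c * q k)) = ennreal (c * suminf q)"
    using \<open>c > 0\<close> q by (simp add: suminf_ennreal2 suminf_mult)
  have le: "q n \<le> suminf q"
    using sum_le_suminf[OF \<open>summable q\<close>, of "{n}"] q by simp
  then show "0 \<le> q n / suminf q" "q n / suminf q \<le> 1"
    using q[of n] by (auto simp: divide_le_eq_1)
  show "(\<Sum>k. ennreal (c * q k)) * ennreal (q n / suminf q) = ennreal (c * q n)"
  proof (cases "suminf q = 0")
    case True
    then show ?thesis using le q[of n] by (simp add: sum)
  next
    case False
    then show ?thesis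
      using le q[of n] \<open>c > 0\<close> by (simp add: sum flip: ennreal_mult)
  qed
qed

lemma distr_eq_density_mixture:
  fixes M :: "'a measure" and U :: "'a \<Rightarrow> nat" and Z :: "'a \<Rightarrow> real"
    and f :: "nat \<Rightarrow> real \<Rightarrow> real" and p :: "nat \<Rightarrow> real"
  assumes "prob_space M" and U_rv: "U \<in> measurable M (count_space UNIV)"
    and Z_rv: "Z \<in> borel_measurable M"
    and f_meas: "\<And>k. f k \<in> borel_measurable borel" and f_nonneg: "\<And>k s. 0 \<le> f k s"
    and f_prob: "\<And>k. prob_space (density lborel (f k))"
    and p_nonneg: "\<And>k. 0 \<le> p k"
    and joint: "\<And>k C. C \<in> sets borel \<Longrightarrow>
      measure M {\<omega> \<in> space M. U \<omega> = k \<and> Z \<omega> \<in> C} = p k * measure (density lborel (f k)) C"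
  shows "distr M borel Z = density lborel (\<lambda>y. \<Sum>k. ennreal (p k * f k y))"
proof (rule measure_eqI)
  interpret prob_space M by fact
  note [measurable] = U_rv Z_rv f_meas
  fix C assume "C \<in> sets (distr M borel Z)"
  then have C[measurable]: "C \<in> sets borel" by simp
  define A where "A k = {\<omega> \<in> space M. U \<omega> = k \<and> Z \<omega> \<in> C}" for k
  have "emeasure (distr M borel Z) C = emeasure M (\<Union>k. A k)"
    by (subst emeasure_distr) (auto simp: A_def intro!: arg_cong[where f="emeasure M"])
  also have "\<dots> = (\<Sum>k. emeasure M (A k))"
    by (rule suminf_emeasure[symmetric]) (auto simp: A_def disjoint_family_on_def)
  also have "\<dots> = (\<Sum>k. ennreal (p k) * emeasure (density lborel (f k)) C)"
  proof (rule suminf_cong)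
    fix k
    interpret Pk: prob_space "density lborel (f k)" by (rule f_prob)
    show "emeasure M (A k) = ennreal (p k) * emeasure (density lborel (f k)) C"
      using joint[OF C, of k] p_nonneg[of k]
      by (simp add: A_def emeasure_eq_measure Pk.emeasure_eq_measure ennreal_mult)
  qed
  also have "\<dots> = (\<Sum>k. \<integral>\<^sup>+ y. ennreal (p k * f k y) * indicator C y \<partial>lborel)"
    using p_nonneg f_nonneg
    by (simp add: emeasure_density nn_integral_cmult ennreal_mult mult.assoc)
  also have "\<dots> = (\<integral>\<^sup>+ y. (\<Sum>k. ennreal (p k * f k y) * indicator C y) \<partial>lborel)"
    by (rule nn_integral_suminf[symmetric]) simp
  also have "\<dots> = emeasure (density lborel (\<lambda>y. \<Sum>k. ennreal (p k * f k y))) C"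
    by (simp add: emeasure_density ennreal_suminf_multc)
  finally show "emeasure (distr M borel Z) C = emeasure (density lborel (\<lambda>y. \<Sum>k. ennreal (p k * f k y))) C" .
qed simp

lemma AE_finite_prob_density:
  assumes "prob_space (density lborel h)" and "h \<in> borel_measurable borel"
  shows "AE y in lborel. h y \<noteq> \<infinity>"
proof -
  have "(\<integral>\<^sup>+ y. h y \<partial>lborel) = 1"
    using prob_space.emeasure_space_1[OF assms(1)] assms(2) by (simp add: emeasure_density)
  then show ?thesis
    using assms(2) by (intro nn_integral_PInf_AE) auto
qed

text \<open>The prior weights \<open>c * w k\<close> need only be known up to the factor \<open>c\<close>, which cancels
  in the posterior weights \<open>w n * f n y / (\<Sum>k. w k * f k y)\<close>.\<close>
theorem measure_label_eq_integral_posterior: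
  fixes M :: "'a measure" and U :: "'a \<Rightarrow> nat" and Z :: "'a \<Rightarrow> real"
    and f :: "nat \<Rightarrow> real \<Rightarrow> real" and w :: "nat \<Rightarrow> real" and c :: real
  assumes "prob_space M" and U_rv: "U \<in> measurable M (count_space UNIV)"
    and Z_rv: "Z \<in> borel_measurable M"
    and f_meas: "\<And>k. f k \<in> borel_measurable borel" and f_nonneg: "\<And>k s. 0 \<le> f k s"
    and f_prob: "\<And>k. prob_space (density lborel (f k))"
    and "c > 0" and w_nonneg: "\<And>k. 0 \<le> w k"
    and joint: "\<And>k C. C \<in> sets borel \<Longrightarrow>
      measure M {\<omega> \<in> space M. U \<omega> = k \<and> Z \<omega> \<in> C} = c * w k * measure (density lborel (f k)) C"
    and B: "B \<in> sets borel"
  shows "measure M {\<omega> \<in> space M. U \<omega> = n \<and> Z \<omega> \<in> B}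
           = (\<integral>\<omega>. indicator B (Z \<omega>) * (w n * f n (Z \<omega>) / (\<Sum>k. w k * f k (Z \<omega>))) \<partial>M)"
proof -
  interpret prob_space M by fact
  interpret Pn: prob_space "density lborel (f n)" by (rule f_prob)
  note [measurable] = U_rv Z_rv f_meas B
  define h where "h y = (\<Sum>k. ennreal (c * (w k * f k y)))" for y
  define g where "g y = indicator B y * (w n * f n y / (\<Sum>k. w k * f k y))" for y
  have [measurable]: "h \<in> borel_measurable borel" "g \<in> borel_measurable borel"
    unfolding h_def g_def by measurable
  have distr_Z: "distr M borel Z = density lborel h"
    unfolding h_def mult.assoc[symmetric]
    using \<open>c > 0\<close> w_nonneg
    by (intro distr_eq_density_mixture[OF \<open>prob_space M\<close> U_rv Z_rv f_meas f_nonneg f_prob _ joint]) auto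
  have h_fin: "AE y in lborel. h y \<noteq> \<infinity>"
    using prob_space_distr[OF Z_rv] by (intro AE_finite_prob_density) (auto simp: distr_Z)
  have g_bounds: "0 \<le> g y \<and> g y \<le> 1"
    and h_times_g: "h y * ennreal (g y) = ennreal (c * w n) * (ennreal (f n y) * indicator B y)"
    if "h y \<noteq> \<infinity>" for y
  proof -
    have "(\<Sum>k. ennreal (c * (w k * f k y))) \<noteq> \<infinity>"
      using that by (simp add: h_def)
    note ratio = ennreal_suminf_times_ratio[OF \<open>c > 0\<close> _ this, of n]
    have "0 \<le> w n * f n y / (\<Sum>k. w k * f k y)" "w n * f n y / (\<Sum>k. w k * f k y) \<le> 1"
      "h y * ennreal (w n * f n y / (\<Sum>k. w k * f k y)) = ennreal (c * (w n * f n y))"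
      using ratio w_nonneg f_nonneg unfolding h_def by simp_all
    then show "0 \<le> g y \<and> g y \<le> 1" "h y * ennreal (g y) = ennreal (c * w n) * (ennreal (f n y) * indicator B y)"
      using \<open>c > 0\<close> w_nonneg[of n] f_nonneg[of n y]
      by (auto simp: g_def indicator_def ennreal_mult[symmetric] mult.assoc)
  qed
  have "AE y in density lborel h. h y \<noteq> \<infinity>"
    using h_fin by (subst AE_density) (auto elim: eventually_mono)
  then have "AE \<omega> in M. h (Z \<omega>) \<noteq> \<infinity>"
    unfolding distr_Z[symmetric] by (rule AE_distrD[OF Z_rv])
  then have g_Z_bounds: "AE \<omega> in M. 0 \<le> g (Z \<omega>) \<and> g (Z \<omega>) \<le> 1"
    by eventually_elim (rule g_bounds)
  have "(\<integral>\<omega>. g (Z \<omega>) \<partial>M) = enn2real (\<integral>\<^sup>+ y. ennreal (g y) \<partial>distr M borel Z)"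
    using g_Z_bounds
    by (subst integral_eq_nn_integral) (auto simp: g_def nn_integral_distr elim: eventually_mono)
  also have "(\<integral>\<^sup>+ y. ennreal (g y) \<partial>distr M borel Z) = (\<integral>\<^sup>+ y. h y * ennreal (g y) \<partial>lborel)"
    unfolding distr_Z by (rule nn_integral_density) auto
  also have "\<dots> = (\<integral>\<^sup>+ y. ennreal (c * w n) * (ennreal (f n y) * indicator B y) \<partial>lborel)"
    using h_fin by (intro nn_integral_cong_AE) (auto elim!: eventually_mono intro: h_times_g)
  also have "\<dots> = c * w n * measure (density lborel (f n)) B"
    using \<open>c > 0\<close> w_nonneg[of n]
    by (simp add: nn_integral_cmult emeasure_density[symmetric] Pn.emeasure_eq_measure flip: ennreal_mult)
  also have "\<dots> = measure M {\<omega> \<in> space M. U \<omega> = n \<and> Z \<omega> \<in> B}"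
    using joint[OF B] by simp
  finally show ?thesis
    by (simp add: g_def)
qed

theorem lemma3p4:
  fixes M :: "'a measure" and t x :: real and d :: "real \<Rightarrow> real"
    and f :: "nat \<Rightarrow> real \<Rightarrow> real"
    and U :: "'a \<Rightarrow> nat" and Xs :: "'a \<Rightarrow> real" and X :: "nat \<Rightarrow> 'a \<Rightarrow> real"
  assumes "prob_space M"
    and "t > 0" and "x \<ge> 0" and "in_D d"
    and f: "\<And>n. is_inv_laplace (Fdelta t x (\<lambda>u. d u + 2 * real n)) (f n)"
    and U_rv: "U \<in> measurable M (count_space UNIV)"
    and U_poisson: "\<And>n. measure M {\<omega> \<in> space M. U \<omega> = n}
                         = exp (- (x / (2 * t))) * (x / (2 * t)) ^ n / fact n"
    and X_exp: "\<And>i. distributed M lborel (X i) (exponential_density (1 / (2 * t)))"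
    and Xs_rv: "Xs \<in> borel_measurable M"
    and Xs_nonneg: "AE \<omega> in M. Xs \<omega> \<ge> 0"
    and Xs_laplace: "\<And>lam. lam \<ge> 0 \<Longrightarrow> (\<integral>\<omega>. exp (- lam * Xs \<omega>) \<partial>M) = Fdelta t x d lam"
    and indep: "prob_space.indep_vars M (\<lambda>_. borel)
                  (\<lambda>i. case i of None \<Rightarrow> (\<lambda>\<omega>. real (U \<omega>))
                              | Some None \<Rightarrow> Xs
                              | Some (Some k) \<Rightarrow> X k) UNIV"
  shows "\<And>n B. B \<in> sets borel \<Longrightarrow>
           measure M {\<omega> \<in> space M. U \<omega> = n \<and> Xs \<omega> + (\<Sum>i<U \<omega>. X i \<omega>) \<in> B}
           = (\<integral>\<omega>. indicator B (Xs \<omega> + (\<Sum>i<U \<omega>. X i \<omega>))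
                   * bcoef t x f (Xs \<omega> + (\<Sum>i<U \<omega>. X i \<omega>)) n \<partial>M)"
proof -
  interpret prob_space M by fact
  define Y where "Y k \<omega> = Xs \<omega> + (\<Sum>i<k. X i \<omega>)" for k \<omega>
  have [measurable]: "X i \<in> borel_measurable M" for i
    using distributed_measurable[OF X_exp] by simp
  note Xs_rv[measurable] U_rv[measurable]
  have Y_rv[measurable]: "Y k \<in> borel_measurable M" for k
    unfolding Y_def by measurable
  have joint: "measure M {\<omega> \<in> space M. U \<omega> = k \<and> Y (U \<omega>) \<omega> \<in> C}
      = exp (- (x / (2 * t))) * ((x / (2 * t)) ^ k / fact k) * measure (density lborel (f k)) C"
    if "C \<in> sets borel" for k C
  proof -
    have "measure M {\<omega> \<in> space M. U \<omega> = k \<and> Y (U \<omega>) \<omega> \<in> C} = measure M {\<omega> \<in> space M. U \<omega> = k \<and> Y k \<omega> \<in> C}"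
      by (auto intro!: arg_cong[where f=prob])
    also have "\<dots> = measure M {\<omega> \<in> space M. U \<omega> = k} * measure (distr M borel (Y k)) C"
      using measure_label_and_Xs_plus_sum[OF \<open>prob_space M\<close> indep _ _ _ that]
      by (simp add: Y_def measure_distr[OF _ that] vimage_def Int_def conj_commute)
    also have "distr M borel (Y k) = density lborel (f k)"
      unfolding Y_def
      by (rule distr_Xs_plus_sum_exponentials[OF \<open>prob_space M\<close> \<open>t > 0\<close> \<open>in_D d\<close> f X_exp Xs_rv Xs_nonneg Xs_laplace indep]) simp_all
    finally show ?thesis
      using U_poisson[of k] by simp
  qed
  fix n :: nat and B :: "real set" assume "B \<in> sets borel"
  show "measure M {\<omega> \<in> space M. U \<omega> = n \<and> Xs \<omega> + (\<Sum>i<U \<omega>. X i \<omega>) \<in> B}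
           = (\<integral>\<omega>. indicator B (Xs \<omega> + (\<Sum>i<U \<omega>. X i \<omega>))
                   * bcoef t x f (Xs \<omega> + (\<Sum>i<U \<omega>. X i \<omega>)) n \<partial>M)"
    using measure_label_eq_integral_posterior[OF \<open>prob_space M\<close> U_rv _ _ _ _ _ _ joint \<open>B \<in> sets borel\<close>]
      f \<open>t > 0\<close> \<open>x \<ge> 0\<close> measurable_compose_countable[OF Y_rv U_rv]
    by (simp add: Y_def bcoef_def is_inv_laplace_def)
qed

end
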